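(* Let $p$ be a NetKAT program that contains no occurrence of $\mathsf{dup}$, and suppose the local compilation $\mathcal{C}(p)$ is defined and equals the forwarding decision diagram $d$. Then for every history $h$, $[\![p]\!]\,h = [\![d]\!]\,h$.
   Context: NetKAT. Fix finitely many fields $f_1,\dots,f_k$, each with natural-number values. A packet $pk$ assigns a natural number $pk.f$ to each field $f$; $pk[f:=n]$ is the packet updated at $f$. A history is a nonempty list of packets, written $pk::h$ (cons) or $\langle pk\rangle$ (singleton). Predicates: $a ::= 1 \mid 0 \mid f=n \mid a+b \mid a\cdot b \mid \neg a$. Programs: $p ::= a \mid f\leftarrow n \mid p+q \mid p\cdot q \mid p^* \mid \mathsf{dup}$. The semantics $[\![p]\!]$ maps histories to sets of histories: $[\![1]\!]h=\{h\}$; $[\![0]\!]h=\emptyset$; $[\![f=n]\!](pk::h)=\{pk::h\}$ if $pk.f=n$ and $\emptyset$ otherwise; $[\![\neg a]\!]h=\{h\}\setminus[\![a]\!]h$; $[\![f\leftarrow n]\!](pk::h)=\{pk[f:=n]::h\}$; $[\![p+q]\!]h=[\![p]\!]h\cup[\![q]\!]h$; $[\![p\cdot q]\!]h=\bigcup_{h'\in[\![p]\!]h}[\![q]\!]h'$; $[\![p^*]\!]h=\bigcup_{i\ge 0}F^i h$ with $F^0h=\{h\}$, $F^{i+1}h=\bigcup_{h'\in[\![p]\!]h}F^ih'$; $[\![\mathsf{dup}]\!](pk::h)=\{pk::pk::h\}$ (on predicates, $+$ and $\cdot$ act as disjunction and conjunction). Forwarding decision diagrams (FDDs). Fields and values carry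 total orders, both written $\sqsubset$. An action $a$ is a finite partial map from fields to values, written $\{f_1\leftarrow n_1,\dots,f_j\leftarrow n_j\}$ with distinct fields; $[\![a]\!](pk::h)=\{pk[f_1:=n_1]\cdots[f_j:=n_j]::h\}$. An FDD is either a constant $\{a_1,\dots,a_m\}$ (a finite set of actions) with $[\![\{a_1,\dots,a_m\}]\!]h=\bigcup_i[\![a_i]\!]h$, or a conditional $(f=n\ ?\ d_1 : d_2)$ with $[\![(f=n?d_1:d_2)]\!](pk::h)=[\![d_1]\!](pk::h)$ if $pk.f=n$ and $[\![d_2]\!](pk::h)$ otherwise. Thus $\{\}$ drops all packets and $\{\{\}\}$ is the identity. Operations on FDDs. Union $d_1+d_2$: $\{A_1\}+\{A_2\}=A_1\cup A_2$ (union of action sets); $(f=n?d_{11}:d_{12})+C=(f=n?d_{11}+C:d_{12}+C)$ for a constant $C$; for $D_2=(f_2=n_2?d_{21}:d_{22})$: $(f_1=n_1?d_{11}:d_{12})+D_2$ equals $(f_1=n_1?d_{11}+d_{21}:d_{12}+d_{22})$ if $f_1=f_2,n_1=n_2$; equals $(f_1=n_1?d_{11}+d_{22}:d_{12}+D_2)$ if $f_1=f_2$ and $n_1\sqsubset n_2$; equals $(f_1=n_1?d_{11}+D_2:d_{12}+D_2)$ if $f_1\sqsubset f_2$; the remaining cases are defined symmetrically. Positive restriction $(f=n)\Rightarrow d$: for a constant $d$ it is $(f=n?d:\{\})$; for $d=(f_1=n_1?d_{11}:d_{12})$ it is $(f=n?d_{11}:\{\})$ if $f=f_1,n=n_1$;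 $(f=n)\Rightarrow d_{12}$ if $f=f_1,n\neq n_1$; $(f=n?d:\{\})$ if $f\sqsubset f_1$; and $(f_1=n_1?(f=n)\Rightarrow d_{11}:(f=n)\Rightarrow d_{12})$ otherwise. Negative restriction $(f\neq n)\Rightarrow d$ is an FDD with $[\![(f\neq n)\Rightarrow d]\!](pk::h)=\emptyset$ if $pk.f=n$ and $=[\![d]\!](pk::h)$ otherwise. Sequencing of actions $a;a'$ is the right-biased merge (value of $a'$ where defined, else of $a$). Sequencing $d_1;d_2$: $a;\{a_1,\dots,a_m\}=\{a;a_1,\dots,a;a_m\}$; $a;(f=n?d_1:d_2)$ equals $a;d_1$ if $f\leftarrow n\in a$, equals $a;d_2$ if $f\leftarrow n'\in a$ with $n'\neq n$, and equals $(f=n?a;d_1:a;d_2)$ otherwise; $\{a_1,\dots,a_m\};d=(a_1;d)+\dots+(a_m;d)$ (which is $\{\}$ when $m=0$); $(f=n?d_{11}:d_{12});d_2=((f=n)\Rightarrow(d_{11};d_2))+((f\neq n)\Rightarrow(d_{12};d_2))$. Negation: $\neg\{\}=\{\{\}\}$; $\neg\{a_1,\dots,a_m\}=\{\}$ for $m\ge1$; $\neg(f=n?d_1:d_2)=(f=n?\neg d_1:\neg d_2)$. Star: $d^*$ is a fixed point of $d'\mapsto\{\{\}\}+(d;d')$ obtained by iteration. Local compilation $\mathcal{C}$: $\mathcal{C}(0)=\{\}$, $\mathcal{C}(1)=\{\{\}\}$, $\mathcal{C}(f\leftarrow n)=\{\{f\leftarrow n\}\}$, $\mathcal{C}(f=n)=(f=n?\{\{\}\}:\{\})$,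 $\mathcal{C}(\neg a)=\neg\mathcal{C}(a)$, $\mathcal{C}(p+q)=\mathcal{C}(p)+\mathcal{C}(q)$, $\mathcal{C}(p\cdot q)=\mathcal{C}(p);\mathcal{C}(q)$, $\mathcal{C}(p^* )=\mathcal{C}(p)^*$. *)

theory Defs
  imports Main
begin

type_synonym 'f packet = "'f \<Rightarrow> nat"
type_synonym 'f history = "'f packet list"   \<comment> \<open>only nonempty lists are histories; head = current packet\<close>

datatype 'f pred =
    PTrue | PFalse | Test 'f nat
  | POr "'f pred" "'f pred" | PAnd "'f pred" "'f pred" | PNot "'f pred"

datatype 'f pol =
    Filter "'f pred" | Mod 'f nat
  | Union "'f pol" "'f pol" | Seq "'f pol" "'f pol" | Star "'f pol" | Dup

fun pred_sem :: "'f pred \<Rightarrow> 'f history \<Rightarrow> 'f history set" where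
  "pred_sem PTrue h = {h}"
| "pred_sem PFalse h = {}"
| "pred_sem (Test f n) [] = {}"
| "pred_sem (Test f n) (pk # h) = (if pk f = n then {pk # h} else {})"
| "pred_sem (POr a b) h = pred_sem a h \<union> pred_sem b h"
| "pred_sem (PAnd a b) h = (\<Union>h'\<in>pred_sem a h. pred_sem b h')"
| "pred_sem (PNot a) h = {h} - pred_sem a h"

primrec kpow :: "('h \<Rightarrow> 'h set) \<Rightarrow> nat \<Rightarrow> 'h \<Rightarrow> 'h set" where
  "kpow F 0 h = {h}"
| "kpow F (Suc i) h = (\<Union>h'\<in>F h. kpow F i h')"

fun pol_sem :: "'f pol \<Rightarrow> 'f history \<Rightarrow> 'f history set" where
  "pol_sem (Filter a) h = pred_sem a h"
| "pol_sem (Mod f n) [] = {}"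
| "pol_sem (Mod f n) (pk # h) = {pk(f := n) # h}"
| "pol_sem (Union p q) h = pol_sem p h \<union> pol_sem q h"
| "pol_sem (Seq p q) h = (\<Union>h'\<in>pol_sem p h. pol_sem q h')"
| "pol_sem (Star p) h = (\<Union>i. kpow (pol_sem p) i h)"
| "pol_sem Dup [] = {}"
| "pol_sem Dup (pk # h) = {pk # pk # h}"

primrec dup_free :: "'f pol \<Rightarrow> bool" where
  "dup_free (Filter a) = True"
| "dup_free (Mod f n) = True"
| "dup_free (Union p q) = (dup_free p \<and> dup_free q)"
| "dup_free (Seq p q) = (dup_free p \<and> dup_free q)"
| "dup_free (Star p) = dup_free p"
| "dup_free Dup = False"

text \<open>An action is a (finite, since there are finitely many fields) partial map
  from fields to values.\<close>
type_synonym 'f action = "'f \<rightharpoonup> nat"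

datatype 'f fdd = Const "'f action set" | Cond 'f nat "'f fdd" "'f fdd"

definition act_apply :: "'f action \<Rightarrow> 'f packet \<Rightarrow> 'f packet" where
  "act_apply a pk = (\<lambda>f. case a f of Some n \<Rightarrow> n | None \<Rightarrow> pk f)"

fun fdd_sem :: "'f fdd \<Rightarrow> 'f history \<Rightarrow> 'f history set" where
  "fdd_sem d [] = {}"
| "fdd_sem (Const A) (pk # h) = (\<Union>a\<in>A. {act_apply a pk # h})"
| "fdd_sem (Cond f n d1 d2) (pk # h) =
     (if pk f = n then fdd_sem d1 (pk # h) else fdd_sem d2 (pk # h))"

fun fdd_union :: "'f::linorder fdd \<Rightarrow> 'f fdd \<Rightarrow> 'f fdd" where
  "fdd_union (Const A) (Const B) = Const (A \<union> B)"
| "fdd_union (Cond f n d1 d2) (Const B) =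
     Cond f n (fdd_union d1 (Const B)) (fdd_union d2 (Const B))"
| "fdd_union (Const A) (Cond f n d1 d2) =
     Cond f n (fdd_union (Const A) d1) (fdd_union (Const A) d2)"
| "fdd_union (Cond f1 n1 d11 d12) (Cond f2 n2 d21 d22) =
     (if f1 = f2 \<and> n1 = n2 then Cond f1 n1 (fdd_union d11 d21) (fdd_union d12 d22)
      else if f1 = f2 \<and> n1 < n2 then
        Cond f1 n1 (fdd_union d11 d22) (fdd_union d12 (Cond f2 n2 d21 d22))
      else if f1 = f2 then
        Cond f2 n2 (fdd_union d12 d21) (fdd_union (Cond f1 n1 d11 d12) d22)
      else if f1 < f2 then
        Cond f1 n1 (fdd_union d11 (Cond f2 n2 d21 d22)) (fdd_union d12 (Cond f2 n2 d21 d22))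
      else
        Cond f2 n2 (fdd_union (Cond f1 n1 d11 d12) d21) (fdd_union (Cond f1 n1 d11 d12) d22))"

primrec pos_restr :: "'f::linorder \<Rightarrow> nat \<Rightarrow> 'f fdd \<Rightarrow> 'f fdd" where
  "pos_restr f n (Const A) = Cond f n (Const A) (Const {})"
| "pos_restr f n (Cond f1 n1 d11 d12) =
     (if f = f1 \<and> n = n1 then Cond f n d11 (Const {})
      else if f = f1 then pos_restr f n d12
      else if f < f1 then Cond f n (Cond f1 n1 d11 d12) (Const {})
      else Cond f1 n1 (pos_restr f n d11) (pos_restr f n d12))"

text \<open>The paper specifies the negative restriction (f \<noteq> n) \<Rightarrow> d only by its semantics;
  we therefore take it as a parameter satisfying this specification.\<close>
definition neg_restr_spec :: "('f \<Rightarrow> nat \<Rightarrow> 'f fdd \<Rightarrow> 'f fdd) \<Rightarrow> bool" where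
  "neg_restr_spec nr \<longleftrightarrow>
     (\<forall>f n d pk h. fdd_sem (nr f n d) (pk # h) =
        (if pk f = n then {} else fdd_sem d (pk # h)))"

primrec seq_act :: "'f action \<Rightarrow> 'f fdd \<Rightarrow> 'f fdd" where
  "seq_act a (Const B) = Const ((\<lambda>b. a ++ b) ` B)"
| "seq_act a (Cond f n d1 d2) =
     (case a f of
        Some n' \<Rightarrow> (if n' = n then seq_act a d1 else seq_act a d2)
      | None \<Rightarrow> Cond f n (seq_act a d1) (seq_act a d2))"

text \<open>For a constant {a1,...,am}, the sum (a1;d)+...+(am;d) is
  formed along some fixed enumeration of the finite action set (ending in + {},
  which is the syntactic identity of union; m = 0 gives {}).\<close>
primrec fdd_seq :: "('f::linorder \<Rightarrow> nat \<Rightarrow> 'f fdd \<Rightarrow> 'f fdd) \<Rightarrow> 'f fdd \<Rightarrow> 'f fdd \<Rightarrow> 'f fdd" where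
  "fdd_seq nr (Const A) d =
     foldr (\<lambda>a acc. fdd_union (seq_act a d) acc) (SOME xs. set xs = A \<and> distinct xs) (Const {})"
| "fdd_seq nr (Cond f n d11 d12) d =
     fdd_union (pos_restr f n (fdd_seq nr d11 d)) (nr f n (fdd_seq nr d12 d))"

primrec fdd_neg :: "'f fdd \<Rightarrow> 'f fdd" where
  "fdd_neg (Const A) = (if A = {} then Const {Map.empty} else Const {})"
| "fdd_neg (Cond f n d1 d2) = Cond f n (fdd_neg d1) (fdd_neg d2)"

primrec star_iter :: "('f::linorder \<Rightarrow> nat \<Rightarrow> 'f fdd \<Rightarrow> 'f fdd) \<Rightarrow> 'f fdd \<Rightarrow> nat \<Rightarrow> 'f fdd" where
  "star_iter nr d 0 = Const {Map.empty}"
| "star_iter nr d (Suc k) = fdd_union (Const {Map.empty}) (fdd_seq nr d (star_iter nr d k))"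

definition fdd_star :: "('f::linorder \<Rightarrow> nat \<Rightarrow> 'f fdd \<Rightarrow> 'f fdd) \<Rightarrow> 'f fdd \<Rightarrow> 'f fdd option" where
  "fdd_star nr d =
     (if \<exists>k. star_iter nr d (Suc k) = star_iter nr d k
      then Some (star_iter nr d (LEAST k. star_iter nr d (Suc k) = star_iter nr d k))
      else None)"

primrec compile_pred :: "('f::linorder \<Rightarrow> nat \<Rightarrow> 'f fdd \<Rightarrow> 'f fdd) \<Rightarrow> 'f pred \<Rightarrow> 'f fdd" where
  "compile_pred nr PFalse = Const {}"
| "compile_pred nr PTrue = Const {Map.empty}"
| "compile_pred nr (Test f n) = Cond f n (Const {Map.empty}) (Const {})"
| "compile_pred nr (PNot a) = fdd_neg (compile_pred nr a)"
| "compile_pred nr (POr a b) = fdd_union (compile_pred nr a) (compile_pred nr b)"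
| "compile_pred nr (PAnd a b) = fdd_seq nr (compile_pred nr a) (compile_pred nr b)"

primrec compile :: "('f::linorder \<Rightarrow> nat \<Rightarrow> 'f fdd \<Rightarrow> 'f fdd) \<Rightarrow> 'f pol \<Rightarrow> 'f fdd option" where
  "compile nr (Filter a) = Some (compile_pred nr a)"
| "compile nr (Mod f n) = Some (Const {[f \<mapsto> n]})"
| "compile nr (Union p q) =
     (case (compile nr p, compile nr q) of
        (Some d1, Some d2) \<Rightarrow> Some (fdd_union d1 d2) | _ \<Rightarrow> None)"
| "compile nr (Seq p q) =
     (case (compile nr p, compile nr q) of
        (Some d1, Some d2) \<Rightarrow> Some (fdd_seq nr d1 d2) | _ \<Rightarrow> None)"
| "compile nr (Star p) = Option.bind (compile nr p) (fdd_star nr)"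
| "compile nr Dup = None"

end

theory Submission
  imports Defs
begin

text \<open>By induction on the program, each FDD operation implements the corresponding semantic
  operation on nonempty histories. The one delicate point is sequencing: it enumerates the
  action set of a leaf, which is faithful only for finite sets. Leaves reachable by a packet are
  finite as soon as the FDD has finite semantics, because with finitely many fields an action is
  determined by its domain together with the packet it produces; so finiteness of the semantics
  is carried along as an invariant of compilation. For the star, the fixed point reached by the
  iteration contains every finite power of the body and hence equals their union.\<close>

lemma Nil_notin_fdd_sem: "[] \<notin> fdd_sem d h"
  by (induction d h rule: fdd_sem.induct) auto

lemma fdd_sem_fdd_union: "fdd_sem (fdd_union d1 d2) h = fdd_sem d1 h \<union> fdd_sem d2 h"
proof (induction d1 d2 rule: fdd_union.induct)
  case (4 f1 n1 d11 d12 f2 n2 d21 d22)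
  then show ?case
    by (cases h) (auto simp del: fdd_union.simps
        simp: fdd_union.simps(4)[of f1 n1 d11 d12 f2 n2 d21 d22] split: if_splits)
qed (cases h; auto)+

lemma fdd_sem_foldr_fdd_union:
  "fdd_sem (foldr (\<lambda>a acc. fdd_union (g a) acc) xs (Const {})) h = (\<Union>a\<in>set xs. fdd_sem (g a) h)"
  by (induction xs) (cases h; auto simp: fdd_sem_fdd_union)+

lemma fdd_sem_pos_restr:
  "fdd_sem (pos_restr f n d) (pk # h) = (if pk f = n then fdd_sem d (pk # h) else {})"
  by (induction d) auto

lemma act_apply_map_add: "act_apply (a ++ b) pk = act_apply b (act_apply a pk)"
  unfolding act_apply_def map_add_def by (auto split: option.splits)

lemma fdd_sem_seq_act: "fdd_sem (seq_act a d) (pk # h) = fdd_sem d (act_apply a pk # h)"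
proof (induction d)
  case (Const B)
  then show ?case by (auto simp: act_apply_map_add)
next
  case (Cond f n d1 d2)
  then show ?case by (cases "a f") (auto simp: act_apply_def)
qed

primrec fdd_leaf :: "'f fdd \<Rightarrow> 'f packet \<Rightarrow> 'f action set" where
  "fdd_leaf (Const A) pk = A"
| "fdd_leaf (Cond f n d1 d2) pk = (if pk f = n then fdd_leaf d1 pk else fdd_leaf d2 pk)"

lemma fdd_sem_eq_image_fdd_leaf: "fdd_sem d (pk # h) = (\<lambda>a. act_apply a pk # h) ` fdd_leaf d pk"
  by (induction d) auto

lemma finite_act_apply_fiber: "finite {a :: 'f::finite action. act_apply a pk = q}"
proof -
  have "inj_on dom {a :: 'f action. act_apply a pk = q}"
  proof (rule inj_onI)
    fix a b :: "'f action"
    assume "a \<in> {a. act_apply a pk = q}" "b \<in> {a. act_apply a pk = q}" and "dom a = dom b"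
    then have "act_apply a pk f = act_apply b pk f" "f \<in> dom a \<longleftrightarrow> f \<in> dom b" for f
      by auto
    then show "a = b"
      unfolding act_apply_def by (intro ext) (metis domIff option.case_eq_if option.expand)
  qed
  then show ?thesis
    using finite_imageD finite by blast
qed

lemma finite_fdd_leaf:
  fixes d :: "'f::finite fdd"
  assumes "finite (fdd_sem d (pk # h))"
  shows "finite (fdd_leaf d pk)"
proof -
  let ?g = "\<lambda>a. act_apply a pk # h"
  have "finite (?g -` (?g ` fdd_leaf d pk) \<inter> fdd_leaf d pk)"
  proof (rule finite_finite_vimage_IntI)
    show "finite (?g ` fdd_leaf d pk)"
      using assms by (simp add: fdd_sem_eq_image_fdd_leaf)
    fix y assume "y \<in> ?g ` fdd_leaf d pk"
    then obtain q where "y = q # h" by auto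
    then have "?g -` {y} \<inter> fdd_leaf d pk \<subseteq> {a. act_apply a pk = q}" by auto
    then show "finite (?g -` {y} \<inter> fdd_leaf d pk)"
      using finite_act_apply_fiber finite_subset by metis
  qed
  then show ?thesis by (simp add: Int_absorb1 subset_vimage_iff)
qed

lemma fdd_sem_fdd_seq_if_finite_leaf:
  assumes nr: "neg_restr_spec nr" and "finite (fdd_leaf d1 pk)"
  shows "fdd_sem (fdd_seq nr d1 d2) (pk # h) = (\<Union>h'\<in>fdd_sem d1 (pk # h). fdd_sem d2 h')"
  using assms(2)
proof (induction d1)
  case (Const A)
  then have "\<exists>xs. set xs = A \<and> distinct xs" by (simp add: finite_distinct_list)
  then have "set (SOME xs. set xs = A \<and> distinct xs) = A" by (metis (mono_tags, lifting) someI_ex)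
  then show ?case by (simp add: fdd_sem_foldr_fdd_union fdd_sem_seq_act)
next
  case (Cond f n d11 d12)
  then show ?case
    using nr unfolding neg_restr_spec_def
    by (simp add: fdd_sem_fdd_union fdd_sem_pos_restr split: if_splits)
qed

definition finite_sem :: "'f fdd \<Rightarrow> bool" where
  "finite_sem d \<longleftrightarrow> (\<forall>h. finite (fdd_sem d h))"

lemma finite_sem_Const:
  assumes "finite A"
  shows "finite_sem (Const A)"
  unfolding finite_sem_def
proof
  fix h
  show "finite (fdd_sem (Const A) h)" using assms by (cases h) auto
qed

lemma fdd_sem_fdd_seq:
  fixes d1 :: "'f::{finite,linorder} fdd"
  assumes "neg_restr_spec nr" and "finite_sem d1"
  shows "fdd_sem (fdd_seq nr d1 d2) (pk # h) = (\<Union>h'\<in>fdd_sem d1 (pk # h). fdd_sem d2 h')"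
  using assms finite_fdd_leaf unfolding finite_sem_def by (intro fdd_sem_fdd_seq_if_finite_leaf) auto

lemma finite_sem_fdd_union: "finite_sem d1 \<Longrightarrow> finite_sem d2 \<Longrightarrow> finite_sem (fdd_union d1 d2)"
  unfolding finite_sem_def by (simp add: fdd_sem_fdd_union)

lemma finite_sem_fdd_seq:
  fixes d1 :: "'f::{finite,linorder} fdd"
  assumes "neg_restr_spec nr" and "finite_sem d1" and "finite_sem d2"
  shows "finite_sem (fdd_seq nr d1 d2)"
  unfolding finite_sem_def
proof
  fix h
  show "finite (fdd_sem (fdd_seq nr d1 d2) h)"
    using assms by (cases h) (auto simp: fdd_sem_fdd_seq finite_sem_def)
qed

lemma fdd_sem_fdd_neg:
  "fdd_sem d (pk # h) \<subseteq> {pk # h} \<Longrightarrow>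
   fdd_sem (fdd_neg d) (pk # h) = {pk # h} - fdd_sem d (pk # h)"
proof (induction d)
  case (Const A)
  show ?case
  proof (cases "A = {}")
    case True
    then show ?thesis by (simp add: act_apply_def)
  next
    case False
    then have "fdd_sem (Const A) (pk # h) \<noteq> {}" by simp
    then have "fdd_sem (Const A) (pk # h) = {pk # h}" using Const by blast
    then show ?thesis using False by simp
  qed
qed auto

lemma pred_sem_subset: "pred_sem a h \<subseteq> {h}"
  by (induction a h rule: pred_sem.induct) auto

lemma fdd_sem_compile_pred:
  fixes nr :: "'f::{finite,linorder} \<Rightarrow> nat \<Rightarrow> 'f fdd \<Rightarrow> 'f fdd"
  assumes nr: "neg_restr_spec nr"
  shows "fdd_sem (compile_pred nr a) (pk # h) = pred_sem a (pk # h)"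
proof (induction a arbitrary: pk h)
  case (PAnd a b)
  have "finite_sem (compile_pred nr a)"
    unfolding finite_sem_def
    by (metis PAnd.IH(1) fdd_sem.simps(1) finite.emptyI finite_insert finite_subset
        neq_Nil_conv pred_sem_subset)
  moreover have "fdd_sem (compile_pred nr b) h' = pred_sem b h'" if "h' \<in> pred_sem a (pk # h)" for h'
    using that pred_sem_subset PAnd.IH(2) by blast
  ultimately show ?case
    by (simp add: fdd_sem_fdd_seq[OF nr] PAnd.IH(1))
next
  case (PNot a)
  then show ?case by (simp add: fdd_sem_fdd_neg pred_sem_subset)
qed (auto simp: fdd_sem_fdd_union act_apply_def)

lemma fdd_sem_star_iter:
  fixes nr :: "'f::{finite,linorder} \<Rightarrow> nat \<Rightarrow> 'f fdd \<Rightarrow> 'f fdd"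
  assumes nr: "neg_restr_spec nr" and fin: "finite_sem d"
  shows "fdd_sem (star_iter nr d k) (pk # h) = (\<Union>i\<le>k. kpow (fdd_sem d) i (pk # h))"
proof (induction k arbitrary: pk h)
  case 0
  then show ?case by (simp add: act_apply_def)
next
  case (Suc k)
  have IH: "fdd_sem (star_iter nr d k) h' = (\<Union>i\<le>k. kpow (fdd_sem d) i h')"
    if "h' \<in> fdd_sem d (pk # h)" for h'
    using that Suc.IH Nil_notin_fdd_sem by (metis neq_Nil_conv)
  have "fdd_sem (star_iter nr d (Suc k)) (pk # h)
      = {pk # h} \<union> (\<Union>h'\<in>fdd_sem d (pk # h). fdd_sem (star_iter nr d k) h')"
    by (simp add: fdd_sem_fdd_union fdd_sem_fdd_seq[OF nr fin] act_apply_def)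
  also have "\<dots> = kpow (fdd_sem d) 0 (pk # h) \<union> (\<Union>i\<le>k. kpow (fdd_sem d) (Suc i) (pk # h))"
    using IH by auto
  also have "\<dots> = (\<Union>i\<le>Suc k. kpow (fdd_sem d) i (pk # h))"
    by (simp add: atMost_Suc_eq_insert_0)
  finally show ?case .
qed

lemma finite_sem_star_iter:
  fixes nr :: "'f::{finite,linorder} \<Rightarrow> nat \<Rightarrow> 'f fdd \<Rightarrow> 'f fdd"
  assumes "neg_restr_spec nr" and "finite_sem d"
  shows "finite_sem (star_iter nr d k)"
proof (induction k)
  case 0
  then show ?case by (simp add: finite_sem_Const)
next
  case (Suc k)
  then show ?case
    by (simp, intro finite_sem_fdd_union finite_sem_Const finite_sem_fdd_seq[OF assms Suc]) simp
qed

lemma star_iter_add_if_stable: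
  "star_iter nr d (Suc k) = star_iter nr d k \<Longrightarrow> star_iter nr d (k + j) = star_iter nr d k"
  by (induction j) auto

lemma fdd_sem_fdd_star:
  fixes nr :: "'f::{finite,linorder} \<Rightarrow> nat \<Rightarrow> 'f fdd \<Rightarrow> 'f fdd"
  assumes nr: "neg_restr_spec nr" and fin: "finite_sem d" and star: "fdd_star nr d = Some d'"
  shows "fdd_sem d' (pk # h) = (\<Union>i. kpow (fdd_sem d) i (pk # h))" and "finite_sem d'"
proof -
  let ?stable = "\<lambda>k. star_iter nr d (Suc k) = star_iter nr d k"
  obtain k where stable: "?stable k" and d': "d' = star_iter nr d k"
    using star LeastI_ex[of ?stable] unfolding fdd_star_def by (auto split: if_splits)
  have "kpow (fdd_sem d) i (pk # h) \<subseteq> fdd_sem d' (pk # h)" for i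
  proof -
    have "kpow (fdd_sem d) i (pk # h) \<subseteq> fdd_sem (star_iter nr d (k + i)) (pk # h)"
      unfolding fdd_sem_star_iter[OF nr fin] by (rule UN_upper) simp
    then show ?thesis
      using star_iter_add_if_stable[OF stable] d' by simp
  qed
  moreover have "fdd_sem d' (pk # h) \<subseteq> (\<Union>i. kpow (fdd_sem d) i (pk # h))"
    by (auto simp: d' fdd_sem_star_iter[OF nr fin])
  ultimately show "fdd_sem d' (pk # h) = (\<Union>i. kpow (fdd_sem d) i (pk # h))"
    by blast
  show "finite_sem d'"
    using finite_sem_star_iter[OF nr fin] d' by simp
qed

lemma kpow_cong:
  assumes "\<And>x. x \<noteq> [] \<Longrightarrow> F x = G x" and "\<And>x y. y \<in> F x \<Longrightarrow> y \<noteq> []" and "x \<noteq> []"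
  shows "kpow F i x = kpow G i x"
  using assms(3)
proof (induction i arbitrary: x)
  case (Suc i)
  then show ?case
    using assms(1,2) by (auto simp del: kpow.simps simp: kpow.simps(2)) (metis assms(1) Suc.prems)+
qed simp

lemma compile_correct:
  fixes nr :: "'f::{finite,linorder} \<Rightarrow> nat \<Rightarrow> 'f fdd \<Rightarrow> 'f fdd"
  assumes nr: "neg_restr_spec nr"
  shows "dup_free p \<Longrightarrow> compile nr p = Some d \<Longrightarrow>
    finite_sem d \<and> (\<forall>h. h \<noteq> [] \<longrightarrow> pol_sem p h = fdd_sem d h)"
proof (induction p arbitrary: d)
  case (Filter a)
  then have d: "d = compile_pred nr a" by simp
  have "finite (pred_sem a h)" for h
    using pred_sem_subset finite_subset by blast
  then have "finite (fdd_sem d h)" for h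
    by (cases h) (simp_all add: d fdd_sem_compile_pred[OF nr])
  then show ?case
    by (auto simp: finite_sem_def d fdd_sem_compile_pred[OF nr] neq_Nil_conv)
next
  case (Mod f n)
  have "act_apply [f \<mapsto> n] pk = pk(f := n)" for pk by (auto simp: act_apply_def)
  then show ?case using Mod by (auto simp: finite_sem_Const neq_Nil_conv)
next
  case (Union p q)
  then obtain d1 d2 where "compile nr p = Some d1" "compile nr q = Some d2" "d = fdd_union d1 d2"
    by (auto split: option.splits)
  with Union show ?case by (simp add: fdd_sem_fdd_union finite_sem_fdd_union)
next
  case (Seq p q)
  then obtain d1 d2 where c1: "compile nr p = Some d1" and c2: "compile nr q = Some d2"
    and d: "d = fdd_seq nr d1 d2" by (auto split: option.splits)
  with Seq have "finite_sem d1" "finite_sem d2"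
    and IH1: "\<And>h. h \<noteq> [] \<Longrightarrow> pol_sem p h = fdd_sem d1 h"
    and IH2: "\<And>h. h \<noteq> [] \<Longrightarrow> pol_sem q h = fdd_sem d2 h" by auto
  moreover have "pol_sem q h' = fdd_sem d2 h'" if "h' \<in> fdd_sem d1 h" for h h'
    using that IH2 Nil_notin_fdd_sem by metis
  ultimately show ?case
    by (auto simp: d neq_Nil_conv fdd_sem_fdd_seq[OF nr] finite_sem_fdd_seq[OF nr])
next
  case (Star p)
  then obtain d0 where "compile nr p = Some d0" and star: "fdd_star nr d0 = Some d"
    by (auto split: Option.bind_splits)
  with Star have fin: "finite_sem d0" and IH: "\<And>h. h \<noteq> [] \<Longrightarrow> pol_sem p h = fdd_sem d0 h"
    by auto
  have "kpow (fdd_sem d0) i h = kpow (pol_sem p) i h" if "h \<noteq> []" for i h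
    by (rule kpow_cong) (use IH Nil_notin_fdd_sem that in auto)
  then show ?case
    using fdd_sem_fdd_star[OF nr fin star] by (auto simp: neq_Nil_conv)
next
  case Dup
  then show ?case by simp
qed

theorem theorem1:
  fixes nr :: "'f::{finite,linorder} \<Rightarrow> nat \<Rightarrow> 'f fdd \<Rightarrow> 'f fdd"
    and p :: "'f pol" and d :: "'f fdd" and h :: "'f history"
  assumes "neg_restr_spec nr"
    and "dup_free p"
    and "compile nr p = Some d"
    and "h \<noteq> []"
  shows "pol_sem p h = fdd_sem d h"
  using compile_correct[OF assms(1-3)] assms(4) by blast

end
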